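(* Let $x_1,\dots,x_n$ be i.i.d. uniform random variables on $[0,1]$. For any $\gamma,\gamma',\delta\in(0,1)$, with probability at least $1-\delta$, $$\mathsf{Q}^+_\gamma\Big(\frac1n\sum_{i=1}^n\delta_{x_i}\Big)-\gamma\le\min_{\varepsilon\in(0,1)}\Big\{(1-\varepsilon)^{-1}\Big[\varepsilon|\gamma-\gamma'|+\sqrt{\frac{2\gamma'(1-\gamma')\log(1/\delta)}{n}}+\Big(\frac23+\frac1{2\varepsilon}\Big)\frac{\log(1/\delta)}{n}\Big]\Big\}.$$ The same upper bound also holds for $\gamma-\mathsf{Q}^-_\gamma\big(\frac1n\sum_{i=1}^n\delta_{x_i}\big)$ with probability at least $1-\delta$.
   Context: For a probability distribution with CDF $F$ and $\gamma\in(0,1)$: $\mathsf{Q}^-_\gamma(F)=\inf\{x:F(x)\ge\gamma\}$ and $\mathsf{Q}^+_\gamma(F)=\inf\{x:F(x)>\gamma\}$. $\delta_x$ is the Dirac measure at $x$. *)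

theory Defs
  imports "HOL-Probability.Probability"
begin

definition Qminus :: "real \<Rightarrow> (real \<Rightarrow> real) \<Rightarrow> real" where
  "Qminus \<gamma> F = Inf {x. F x \<ge> \<gamma>}"

definition Qplus :: "real \<Rightarrow> (real \<Rightarrow> real) \<Rightarrow> real" where
  "Qplus \<gamma> F = Inf {x. F x > \<gamma>}"

text \<open>CDF of the empirical measure (1/n) sum_{i<n} delta_{x i}.\<close>
definition emp_cdf :: "nat \<Rightarrow> (nat \<Rightarrow> real) \<Rightarrow> real \<Rightarrow> real" where
  "emp_cdf n x t = real (card {i. i < n \<and> x i \<le> t}) / real n"

definition qbound :: "nat \<Rightarrow> real \<Rightarrow> real \<Rightarrow> real \<Rightarrow> real \<Rightarrow> real" where
  "qbound n \<gamma> \<gamma>' \<delta> \<epsilon> =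
     inverse (1 - \<epsilon>) * (\<epsilon> * \<bar>\<gamma> - \<gamma>'\<bar>
       + sqrt (2 * \<gamma>' * (1 - \<gamma>') * ln (1 / \<delta>) / real n)
       + (2/3 + 1 / (2 * \<epsilon>)) * ln (1 / \<delta>) / real n)"

definition unif_n :: "nat \<Rightarrow> (nat \<Rightarrow> real) measure" where
  "unif_n n = PiM {..<n} (\<lambda>_. uniform_measure lborel {0..1})"

end

theory Submission
  imports Defs
begin

text \<open>
  For a fixed level p, n times the empirical distribution function at p is a sum of n
  independent Bernoulli(p) indicators, so Bernstein's inequality bounds the probability
  that it deviates from p by t in either direction by exp(-n t^2 / (2 (p(1-p) + t/3))).
  Let T be the right-hand side of the claim and apply this at p = gamma + T and
  p = gamma - T.  Using sqrt(u + w) \<le> sqrt u + sqrt w and the weighted AM-GM inequality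
  with weight epsilon, the inequality qbound(epsilon) \<le> T becomes
  n T^2 \<ge> 2 log(1/delta) (gamma'(1-gamma') + |gamma - gamma'| + 4T/3); and since
  p(1-p) \<le> gamma'(1-gamma') + |p - gamma'| \<le> gamma'(1-gamma') + |gamma - gamma'| + T,
  both Bernstein bounds are at most delta.  Off the exceptional events, F(gamma + T) > gamma
  forces the upper quantile below gamma + T, and F(gamma - T) < gamma forces the lower
  quantile above gamma - T; when gamma \<plusminus> T leaves (0, 1), the sample lying in [0, 1]
  makes this hold almost surely.
\<close>

section \<open>Bernstein's inequality for sums of Bernoulli indicators\<close>

lemma two_mult_three_power_le_fact: "2 * 3 ^ n \<le> (fact (n + 2) :: real)"
proof (induction n)
  case 0
  then show ?case by (simp add: numeral_2_eq_2)
next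
  case (Suc n)
  have "fact (Suc n + 2) = real (n + 3) * fact (n + 2)"
    by (simp add: numeral_3_eq_3 numeral_2_eq_2 algebra_simps)
  also have "\<dots> \<ge> 3 * (2 * 3 ^ n)"
    using Suc by (intro mult_mono) auto
  finally show ?case by simp
qed

lemma exp_le_Bernstein:
  fixes x :: real
  assumes "\<bar>x\<bar> < 3"
  shows "exp x \<le> 1 + x + x\<^sup>2 / (2 * (1 - \<bar>x\<bar> / 3))"
proof -
  define r where "r = \<bar>x\<bar> / 3"
  have r: "0 \<le> r" "r < 1"
    using assms by (auto simp: r_def)
  have "(\<lambda>k. x ^ k / fact k) sums exp x"
    using exp_converges[of x] by (simp add: divide_inverse_commute scaleR_conv_of_real)
  then have "(\<lambda>k. x ^ (k + 2) / fact (k + 2)) sums (exp x - (\<Sum>k<2. x ^ k / fact k))"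
    by (subst sums_iff_shift')
  then have tail: "(\<lambda>k. x ^ (k + 2) / fact (k + 2)) sums (exp x - 1 - x)"
    by (simp add: numeral_2_eq_2 diff_diff_eq)
  have geometric: "(\<lambda>k. x\<^sup>2 / 2 * r ^ k) sums (x\<^sup>2 / 2 * (1 / (1 - r)))"
    using geometric_sums[of r] r by (intro sums_mult) auto
  have "x ^ (k + 2) / fact (k + 2) \<le> x\<^sup>2 / 2 * r ^ k" for k
  proof -
    have "x ^ (k + 2) / fact (k + 2) \<le> \<bar>x\<bar> ^ (k + 2) / fact (k + 2)"
      by (intro divide_right_mono) (metis abs_ge_self power_abs, simp)
    also have "\<dots> \<le> \<bar>x\<bar> ^ (k + 2) / (2 * 3 ^ k)"
      by (intro divide_left_mono two_mult_three_power_le_fact) auto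
    also have "\<dots> = x\<^sup>2 / 2 * r ^ k"
      by (simp add: r_def power_add power_divide power2_eq_square)
    finally show ?thesis .
  qed
  then have "exp x - 1 - x \<le> x\<^sup>2 / 2 * (1 / (1 - r))"
    using tail geometric by (rule sums_le)
  then show ?thesis
    using r by (simp add: r_def field_simps)
qed

lemma exp_mult_le_Bernstein:
  fixes l z :: real
  assumes "\<bar>z\<bar> \<le> 1" "0 \<le> l" "l < 3"
  shows "exp (l * z) \<le> 1 + l * z + z\<^sup>2 * (l\<^sup>2 / (2 * (1 - l / 3)))"
proof -
  have lz: "\<bar>l * z\<bar> \<le> l"
    using assms by (simp add: abs_mult mult_left_le)
  then have "exp (l * z) \<le> 1 + l * z + (l * z)\<^sup>2 / (2 * (1 - \<bar>l * z\<bar> / 3))"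
    using assms by (intro exp_le_Bernstein) simp
  also have "(l * z)\<^sup>2 / (2 * (1 - \<bar>l * z\<bar> / 3)) \<le> (l * z)\<^sup>2 / (2 * (1 - l / 3))"
    using lz assms by (intro divide_left_mono mult_pos_pos) auto
  finally show ?thesis
    by (simp add: power_mult_distrib mult.commute)
qed

lemma Bernstein_exponent_at_optimum:
  fixes \<sigma> t :: real
  assumes "0 < \<sigma>" "0 < t"
  shows "- (t / (\<sigma> + t / 3)) * t
           + \<sigma> * ((t / (\<sigma> + t / 3))\<^sup>2 / (2 * (1 - t / (\<sigma> + t / 3) / 3)))
         = - t\<^sup>2 / (2 * (\<sigma> + t / 3))"
proof -
  define D where "D = \<sigma> + t / 3"
  have D: "0 < D" using assms by (simp add: D_def)
  have "1 - t / D / 3 = \<sigma> / D"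
    using D by (simp add: D_def field_simps)
  moreover have "\<sigma> * ((t / D)\<^sup>2 / (2 * (\<sigma> / D))) = t\<^sup>2 / (2 * D)"
    using D assms by (simp add: field_simps power2_eq_square)
  ultimately have "\<sigma> * ((t / D)\<^sup>2 / (2 * (1 - t / D / 3))) = t\<^sup>2 / (2 * D)"
    by simp
  then show ?thesis
    using D by (simp flip: D_def add: field_simps power2_eq_square)
qed

abbreviation unif01 :: "real measure" where
  "unif01 \<equiv> uniform_measure lborel {0..1}"

lemma prob_space_unif01: "prob_space unif01"
  by (intro prob_space_uniform_measure) auto

lemma prob_space_unif_n: "prob_space (unif_n n)"
  unfolding unif_n_def by (intro prob_space_PiM prob_space_unif01)

lemma AE_unif_n_unit_interval: "AE x in unif_n n. \<forall>i<n. x i \<in> {0..1}"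
proof -
  interpret prob_space "unif_n n"
    by (rule prob_space_unif_n)
  have "AE x in unif_n n. x i \<in> {0..1}" if "i < n" for i
  proof -
    have "AE u in unif01. u \<in> {0..1}"
      by (rule AE_uniform_measureI) auto
    then show ?thesis
      unfolding unif_n_def using that by (intro AE_PiM_component prob_space_unif01) auto
  qed
  then have "AE x in unif_n n. \<forall>i\<in>{..<n}. x i \<in> {0..1}"
    by (intro eventually_ball_finite) auto
  then show ?thesis
    by (simp only: Ball_def lessThan_iff)
qed

lemma nn_integral_exp_centered_indicator_le:
  fixes p l s :: real
  assumes "0 < p" "p < 1" "0 \<le> l" "l < 3" "\<bar>s\<bar> = 1"
  shows "(\<integral>\<^sup>+u. ennreal (exp (l * (s * ((if u \<le> p then 1 else 0) - p)))) \<partial>unif01)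
           \<le> ennreal (exp (p * (1 - p) * (l\<^sup>2 / (2 * (1 - l / 3)))))"
proof -
  define \<psi> where "\<psi> = l\<^sup>2 / (2 * (1 - l / 3))"
  define c1 where "c1 = 1 + l * (s * (1 - p)) + (1 - p)\<^sup>2 * \<psi>"
  define c0 where "c0 = 1 - l * (s * p) + p\<^sup>2 * \<psi>"
  have pointwise: "exp (l * (s * ((if u \<le> p then 1 else 0) - p))) \<le> (if u \<le> p then c1 else c0)"
    for u
  proof -
    have "s\<^sup>2 = 1"
      using assms(5) by (metis power2_abs power_one)
    then show ?thesis
      using exp_mult_le_Bernstein[of "s * ((if u \<le> p then 1 else 0) - p)" l] assms
      by (auto simp: c1_def c0_def \<psi>_def abs_mult power_mult_distrib)
  qed
  have "0 \<le> c1"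
    using order.trans[OF exp_ge_zero pointwise[of p]] by simp
  have "0 \<le> c0"
    using order.trans[OF exp_ge_zero pointwise[of 1]] assms by simp
  have "(\<integral>\<^sup>+u. ennreal (exp (l * (s * ((if u \<le> p then 1 else 0) - p)))) \<partial>unif01)
     \<le> (\<integral>\<^sup>+u. ennreal c1 * indicator {..p} u + ennreal c0 * indicator {p<..} u \<partial>unif01)"
  proof (intro nn_integral_mono)
    fix u
    show "ennreal (exp (l * (s * ((if u \<le> p then 1 else 0) - p))))
        \<le> ennreal c1 * indicator {..p} u + ennreal c0 * indicator {p<..} u"
      using pointwise[of u] by (auto simp: indicator_def intro!: ennreal_leI)
  qed
  also have "\<dots> = ennreal c1 * emeasure unif01 {..p} + ennreal c0 * emeasure unif01 {p<..}"
    by (subst nn_integral_add) (auto simp: nn_integral_cmult_indicator)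
  also have "emeasure unif01 {..p} = ennreal p"
  proof -
    have "{0..1} \<inter> {..p} = {0..p}"
      using assms by auto
    then show ?thesis
      using assms
      by (simp add: emeasure_uniform_measure divide_ennreal_def
          del: Int_atLeastAtMostR2 atMost_Int_atLeast)
  qed
  also have "emeasure unif01 {p<..} = ennreal (1 - p)"
  proof -
    have "{0..1} \<inter> {p<..} = {p<..1}"
      using assms by auto
    then show ?thesis
      using assms by (simp add: emeasure_uniform_measure divide_ennreal_def)
  qed
  also have "ennreal c1 * ennreal p + ennreal c0 * ennreal (1 - p) = ennreal (c1 * p + c0 * (1 - p))"
    using \<open>0 \<le> c1\<close> \<open>0 \<le> c0\<close> assms by (simp add: ennreal_mult ennreal_plus)
  also have "c1 * p + c0 * (1 - p) = 1 + p * (1 - p) * \<psi>"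
    by (simp add: c1_def c0_def power2_eq_square algebra_simps)
  also have "\<dots> \<le> ennreal (exp (p * (1 - p) * \<psi>))"
    by (intro ennreal_leI) (simp add: add.commute exp_ge_add_one_self)
  finally show ?thesis
    by (simp add: \<psi>_def)
qed

lemma nn_integral_exp_indicator_sum_le:
  fixes p l s :: real
  assumes "0 < p" "p < 1" "0 \<le> l" "l < 3" "\<bar>s\<bar> = 1"
  shows "(\<integral>\<^sup>+x. ennreal (exp (l * (s * (\<Sum>i<n. (if x i \<le> p then 1 else 0) - p)))) \<partial>unif_n n)
           \<le> ennreal (exp (real n * (p * (1 - p) * (l\<^sup>2 / (2 * (1 - l / 3))))))"
proof -
  interpret product_sigma_finite "\<lambda>_. unif01"
    unfolding product_sigma_finite_def
    using prob_space_unif01 prob_space_imp_sigma_finite by blast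
  have "(\<integral>\<^sup>+x. ennreal (exp (l * (s * (\<Sum>i<n. (if x i \<le> p then 1 else 0) - p)))) \<partial>unif_n n)
      = (\<integral>\<^sup>+x. (\<Prod>i<n. ennreal (exp (l * (s * ((if x i \<le> p then 1 else 0) - p))))) \<partial>unif_n n)"
    by (simp add: sum_distrib_left exp_sum prod_ennreal)
  also have "\<dots> = (\<Prod>i<n. \<integral>\<^sup>+u. ennreal (exp (l * (s * ((if u \<le> p then 1 else 0) - p)))) \<partial>unif01)"
    unfolding unif_n_def by (rule product_nn_integral_prod) auto
  also have "\<dots> \<le> (\<Prod>i<n. ennreal (exp (p * (1 - p) * (l\<^sup>2 / (2 * (1 - l / 3))))))"
    using nn_integral_exp_centered_indicator_le[OF assms] by (intro prod_mono_ennreal)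
  also have "\<dots> = ennreal (exp (real n * (p * (1 - p) * (l\<^sup>2 / (2 * (1 - l / 3))))))"
    by (simp only: prod_constant card_lessThan ennreal_power exp_ge_zero
        exp_of_nat_mult)
  finally show ?thesis .
qed

lemma Bernstein_inequality_indicator_sum:
  fixes p t s :: real
  assumes "0 < p" "p < 1" "0 < t" "\<bar>s\<bar> = 1"
  shows "measure (unif_n n)
           {x \<in> space (unif_n n). real n * t \<le> s * (\<Sum>i<n. (if x i \<le> p then 1 else 0) - p)}
         \<le> exp (- (real n * t\<^sup>2) / (2 * (p * (1 - p) + t / 3)))"
proof -
  define \<sigma> where "\<sigma> = p * (1 - p)"
  define l where "l = t / (\<sigma> + t / 3)"
  define f where "f x = s * (\<Sum>i<n. (if x i \<le> p then 1 else 0) - p)" for x :: "nat \<Rightarrow> real"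
  interpret prob_space "unif_n n"
    by (rule prob_space_unif_n)
  have "0 < \<sigma>"
    using assms by (simp add: \<sigma>_def)
  then have l: "0 < l" "l < 3"
    using assms by (simp_all add: l_def field_simps)
  have [measurable]: "f \<in> borel_measurable (unif_n n)"
    unfolding f_def unif_n_def by measurable
  have "emeasure (unif_n n) {x \<in> space (unif_n n). real n * t \<le> f x}
      \<le> ennreal (exp (- l * (real n * t)))
          * (\<integral>\<^sup>+x. ennreal (exp (l * f x)) * indicator (space (unif_n n)) x \<partial>unif_n n)"
    using l by (intro Chernoff_ineq_nn_integral_ge) auto
  also have "(\<integral>\<^sup>+x. ennreal (exp (l * f x)) * indicator (space (unif_n n)) x \<partial>unif_n n)
      = (\<integral>\<^sup>+x. ennreal (exp (l * f x)) \<partial>unif_n n)"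
    by (intro nn_integral_cong) simp
  also have "\<dots> \<le> ennreal (exp (real n * (\<sigma> * (l\<^sup>2 / (2 * (1 - l / 3))))))"
    unfolding f_def \<sigma>_def using assms l by (intro nn_integral_exp_indicator_sum_le) auto
  also have "ennreal (exp (- l * (real n * t))) * ennreal (exp (real n * (\<sigma> * (l\<^sup>2 / (2 * (1 - l / 3))))))
      = ennreal (exp (real n * (- l * t + \<sigma> * (l\<^sup>2 / (2 * (1 - l / 3))))))"
    by (simp flip: ennreal_mult exp_add add: algebra_simps)
  also have "- l * t + \<sigma> * (l\<^sup>2 / (2 * (1 - l / 3))) = - t\<^sup>2 / (2 * (\<sigma> + t / 3))"
    unfolding l_def using \<open>0 < \<sigma>\<close> \<open>0 < t\<close> by (rule Bernstein_exponent_at_optimum)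
  finally have "emeasure (unif_n n) {x \<in> space (unif_n n). real n * t \<le> f x}
      \<le> ennreal (exp (- (real n * t\<^sup>2) / (2 * (\<sigma> + t / 3))))"
    by (simp add: mult_left_mono)
  then show ?thesis
    by (simp add: emeasure_eq_measure f_def \<sigma>_def)
qed

section \<open>The empirical distribution function\<close>

lemma emp_cdf_eq_sum: "emp_cdf n x s = (\<Sum>i<n. if x i \<le> s then 1 else 0) / real n"
proof -
  have "(\<Sum>i<n. if x i \<le> s then 1 else 0 :: real) = (\<Sum>i\<in>{i\<in>{..<n}. x i \<le> s}. 1)"
    by (rule sum.inter_filter[symmetric]) simp
  also have "{i\<in>{..<n}. x i \<le> s} = {i. i < n \<and> x i \<le> s}"
    by auto
  finally show ?thesis
    by (simp add: emp_cdf_def)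
qed

lemma emp_cdf_eq_sum_centered:
  assumes "n \<ge> 1"
  shows "emp_cdf n x p = (\<Sum>i<n. (if x i \<le> p then 1 else 0) - p) / real n + p"
  using assms by (simp add: emp_cdf_eq_sum sum_subtractf field_simps)

lemma mono_emp_cdf: "mono (emp_cdf n x)"
  unfolding emp_cdf_def by (intro monoI divide_right_mono of_nat_mono card_mono) auto

lemma emp_cdf_eq_1:
  assumes "n \<ge> 1" "\<forall>i<n. x i \<le> s"
  shows "emp_cdf n x s = 1"
proof -
  have "{i. i < n \<and> x i \<le> s} = {..<n}"
    using assms by auto
  then show ?thesis
    using assms by (simp add: emp_cdf_def)
qed

lemma emp_cdf_eq_0:
  assumes "\<forall>i<n. s < x i"
  shows "emp_cdf n x s = 0"
proof -
  have "{i. i < n \<and> x i \<le> s} = {}"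
    using assms by force
  then show ?thesis
    by (simp add: emp_cdf_def)
qed

lemma bdd_below_emp_cdf_pos: "bdd_below {s. 0 < emp_cdf n x s}"
proof (rule bdd_belowI)
  fix s
  assume "s \<in> {s. 0 < emp_cdf n x s}"
  then obtain i where "i < n" "x i \<le> s"
    using emp_cdf_eq_0[of n s x] by (metis less_irrefl mem_Collect_eq not_less)
  then show "Min (x ` {..<n}) \<le> s"
    by (meson Min_le finite_imageI finite_lessThan image_eqI lessThan_iff order_trans)
qed

lemma borel_measurable_emp_cdf [measurable]:
  "(\<lambda>x. emp_cdf n x s) \<in> borel_measurable (unif_n n)"
  unfolding emp_cdf_eq_sum unif_n_def by measurable

lemma emp_cdf_lower_tail:
  fixes p t :: real
  assumes "n \<ge> 1" "0 < p" "p < 1" "0 < t"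
  shows "measure (unif_n n) {x \<in> space (unif_n n). emp_cdf n x p \<le> p - t}
         \<le> exp (- (real n * t\<^sup>2) / (2 * (p * (1 - p) + t / 3)))"
proof -
  have "emp_cdf n x p \<le> p - t \<longleftrightarrow> real n * t \<le> - 1 * (\<Sum>i<n. (if x i \<le> p then 1 else 0) - p)" for x
    using assms(1) by (auto simp: emp_cdf_eq_sum_centered[OF assms(1)] field_simps)
  then show ?thesis
    using Bernstein_inequality_indicator_sum[of p t "- 1" n] assms by simp
qed

lemma emp_cdf_upper_tail:
  fixes p t :: real
  assumes "n \<ge> 1" "0 < p" "p < 1" "0 < t"
  shows "measure (unif_n n) {x \<in> space (unif_n n). p + t \<le> emp_cdf n x p}
         \<le> exp (- (real n * t\<^sup>2) / (2 * (p * (1 - p) + t / 3)))"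
proof -
  have "p + t \<le> emp_cdf n x p \<longleftrightarrow> real n * t \<le> 1 * (\<Sum>i<n. (if x i \<le> p then 1 else 0) - p)" for x
    using assms(1) by (auto simp: emp_cdf_eq_sum_centered[OF assms(1)] field_simps)
  then show ?thesis
    using Bernstein_inequality_indicator_sum[of p t 1 n] assms by simp
qed

section \<open>Quantiles of the empirical distribution\<close>

text \<open>
  Testing F only along the sequence c + 1/(k+1) instead of at all points to the right of c
  makes the quantile events countable intersections of events about F, hence measurable.
\<close>

lemma Inf_strict_superlevel_le_iff:
  fixes F :: "real \<Rightarrow> real"
  assumes "mono F" "\<exists>s. g < F s" "bdd_below {s. g < F s}"
  shows "Inf {s. g < F s} \<le> c \<longleftrightarrow> (\<forall>k. g < F (c + inverse (real (Suc k))))"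
proof
  assume le: "Inf {s. g < F s} \<le> c"
  show "\<forall>k. g < F (c + inverse (real (Suc k)))"
  proof
    fix k
    have "0 < inverse (real (Suc k))"
      by simp
    with le have "Inf {s. g < F s} < c + inverse (real (Suc k))"
      by linarith
    then obtain s where "g < F s" "s < c + inverse (real (Suc k))"
      using cInf_lessD[of "{s. g < F s}"] assms(2) by auto
    then show "g < F (c + inverse (real (Suc k)))"
      using monoD[OF assms(1), of s "c + inverse (real (Suc k))"] by simp
  qed
next
  assume gt: "\<forall>k. g < F (c + inverse (real (Suc k)))"
  show "Inf {s. g < F s} \<le> c"
  proof (rule ccontr)
    assume "\<not> Inf {s. g < F s} \<le> c"
    then obtain k where k: "inverse (real (Suc k)) < Inf {s. g < F s} - c"
      using reals_Archimedean[of "Inf {s. g < F s} - c"] by auto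
    have "Inf {s. g < F s} \<le> c + inverse (real (Suc k))"
      using gt assms(3) by (intro cInf_lower) auto
    with k show False
      by simp
  qed
qed

lemma le_Inf_superlevel_iff:
  fixes F :: "real \<Rightarrow> real"
  assumes "mono F" "\<exists>s. g \<le> F s" "bdd_below {s. g \<le> F s}"
  shows "c \<le> Inf {s. g \<le> F s} \<longleftrightarrow> (\<forall>k. F (c - inverse (real (Suc k))) < g)"
proof
  assume le: "c \<le> Inf {s. g \<le> F s}"
  show "\<forall>k. F (c - inverse (real (Suc k))) < g"
  proof (rule ccontr)
    assume "\<not> (\<forall>k. F (c - inverse (real (Suc k))) < g)"
    then obtain k where "g \<le> F (c - inverse (real (Suc k)))"
      by (auto simp: not_less)
    then have "Inf {s. g \<le> F s} \<le> c - inverse (real (Suc k))"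
      using assms(3) by (intro cInf_lower) auto
    moreover have "0 < inverse (real (Suc k))"
      by simp
    ultimately show False
      using le by linarith
  qed
next
  assume lt: "\<forall>k. F (c - inverse (real (Suc k))) < g"
  show "c \<le> Inf {s. g \<le> F s}"
  proof (rule cInf_greatest)
    show "{s. g \<le> F s} \<noteq> {}"
      using assms(2) by auto
  next
    fix s
    assume s: "s \<in> {s. g \<le> F s}"
    show "c \<le> s"
    proof (rule ccontr)
      assume "\<not> c \<le> s"
      then obtain k where "inverse (real (Suc k)) < c - s"
        using reals_Archimedean[of "c - s"] by auto
      then have "F s \<le> F (c - inverse (real (Suc k)))"
        by (intro monoD[OF assms(1)]) simp
      with s lt show False
        by (metis mem_Collect_eq not_le order_trans)
    qed
  qed
qed

lemma Qplus_emp_cdf_le_iff: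
  assumes "n \<ge> 1" "0 \<le> \<gamma>" "\<gamma> < 1"
  shows "Qplus \<gamma> (emp_cdf n x) \<le> c \<longleftrightarrow> (\<forall>k. \<gamma> < emp_cdf n x (c + inverse (real (Suc k))))"
  unfolding Qplus_def
proof (rule Inf_strict_superlevel_le_iff[OF mono_emp_cdf])
  show "\<exists>s. \<gamma> < emp_cdf n x s"
    using emp_cdf_eq_1[of n x "Max (x ` {..<n})"] assms
    by (metis Max_ge finite_imageI finite_lessThan image_eqI lessThan_iff)
  show "bdd_below {s. \<gamma> < emp_cdf n x s}"
    using assms by (intro bdd_below_mono[OF bdd_below_emp_cdf_pos[of n x]]) auto
qed

lemma Qminus_emp_cdf_ge_iff:
  assumes "n \<ge> 1" "0 < \<gamma>" "\<gamma> \<le> 1"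
  shows "c \<le> Qminus \<gamma> (emp_cdf n x) \<longleftrightarrow> (\<forall>k. emp_cdf n x (c - inverse (real (Suc k))) < \<gamma>)"
  unfolding Qminus_def
proof (rule le_Inf_superlevel_iff[OF mono_emp_cdf])
  show "\<exists>s. \<gamma> \<le> emp_cdf n x s"
    using emp_cdf_eq_1[of n x "Max (x ` {..<n})"] assms
    by (metis Max_ge finite_imageI finite_lessThan image_eqI lessThan_iff)
  show "bdd_below {s. \<gamma> \<le> emp_cdf n x s}"
    using assms by (intro bdd_below_mono[OF bdd_below_emp_cdf_pos[of n x]]) auto
qed

lemma sets_Qplus_emp_cdf_le:
  assumes "n \<ge> 1" "0 \<le> \<gamma>" "\<gamma> < 1"
  shows "{x \<in> space (unif_n n). Qplus \<gamma> (emp_cdf n x) \<le> c} \<in> sets (unif_n n)"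
  unfolding Qplus_emp_cdf_le_iff[OF assms] by measurable

lemma sets_Qminus_emp_cdf_ge:
  assumes "n \<ge> 1" "0 < \<gamma>" "\<gamma> \<le> 1"
  shows "{x \<in> space (unif_n n). c \<le> Qminus \<gamma> (emp_cdf n x)} \<in> sets (unif_n n)"
  unfolding Qminus_emp_cdf_ge_iff[OF assms] by measurable

lemma prob_Qplus_emp_cdf_le:
  assumes "n \<ge> 1" "0 \<le> \<gamma>" "\<gamma> < 1"
  shows "1 - measure (unif_n n) {x \<in> space (unif_n n). emp_cdf n x c \<le> \<gamma>}
           \<le> measure (unif_n n) {x \<in> space (unif_n n). Qplus \<gamma> (emp_cdf n x) \<le> c}"
proof -
  interpret prob_space "unif_n n"
    by (rule prob_space_unif_n)
  have "{x \<in> space (unif_n n). \<not> emp_cdf n x c \<le> \<gamma>}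
      \<subseteq> {x \<in> space (unif_n n). Qplus \<gamma> (emp_cdf n x) \<le> c}"
  proof safe
    fix x
    assume "\<not> emp_cdf n x c \<le> \<gamma>"
    moreover have "emp_cdf n x c \<le> emp_cdf n x (c + inverse (real (Suc k)))" for k
      by (intro monoD[OF mono_emp_cdf]) simp
    ultimately show "Qplus \<gamma> (emp_cdf n x) \<le> c"
      unfolding Qplus_emp_cdf_le_iff[OF assms] by (meson less_le_trans not_le)
  qed
  then have "prob {x \<in> space (unif_n n). \<not> emp_cdf n x c \<le> \<gamma>}
      \<le> prob {x \<in> space (unif_n n). Qplus \<gamma> (emp_cdf n x) \<le> c}"
    by (intro finite_measure_mono sets_Qplus_emp_cdf_le[OF assms])
  moreover have "prob {x \<in> space (unif_n n). \<not> emp_cdf n x c \<le> \<gamma>}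
      = 1 - prob {x \<in> space (unif_n n). emp_cdf n x c \<le> \<gamma>}"
    by (intro prob_neg) measurable
  ultimately show ?thesis
    by simp
qed

lemma prob_Qminus_emp_cdf_ge:
  assumes "n \<ge> 1" "0 < \<gamma>" "\<gamma> \<le> 1"
  shows "1 - measure (unif_n n) {x \<in> space (unif_n n). \<gamma> \<le> emp_cdf n x c}
           \<le> measure (unif_n n) {x \<in> space (unif_n n). c \<le> Qminus \<gamma> (emp_cdf n x)}"
proof -
  interpret prob_space "unif_n n"
    by (rule prob_space_unif_n)
  have "{x \<in> space (unif_n n). \<not> \<gamma> \<le> emp_cdf n x c}
      \<subseteq> {x \<in> space (unif_n n). c \<le> Qminus \<gamma> (emp_cdf n x)}"
  proof safe
    fix x
    assume "\<not> \<gamma> \<le> emp_cdf n x c"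
    moreover have "emp_cdf n x (c - inverse (real (Suc k))) \<le> emp_cdf n x c" for k
      by (intro monoD[OF mono_emp_cdf]) simp
    ultimately show "c \<le> Qminus \<gamma> (emp_cdf n x)"
      unfolding Qminus_emp_cdf_ge_iff[OF assms] by (meson le_less_trans not_le)
  qed
  then have "prob {x \<in> space (unif_n n). \<not> \<gamma> \<le> emp_cdf n x c}
      \<le> prob {x \<in> space (unif_n n). c \<le> Qminus \<gamma> (emp_cdf n x)}"
    by (intro finite_measure_mono sets_Qminus_emp_cdf_ge[OF assms])
  moreover have "prob {x \<in> space (unif_n n). \<not> \<gamma> \<le> emp_cdf n x c}
      = 1 - prob {x \<in> space (unif_n n). \<gamma> \<le> emp_cdf n x c}"
    by (intro prob_neg) measurable
  ultimately show ?thesis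
    by simp
qed

lemma prob_Qplus_emp_cdf_le_eq_1:
  assumes "n \<ge> 1" "0 \<le> \<gamma>" "\<gamma> < 1" "1 \<le> c"
  shows "measure (unif_n n) {x \<in> space (unif_n n). Qplus \<gamma> (emp_cdf n x) \<le> c} = 1"
proof -
  interpret prob_space "unif_n n"
    by (rule prob_space_unif_n)
  have "AE x in unif_n n. Qplus \<gamma> (emp_cdf n x) \<le> c"
    using AE_unif_n_unit_interval[of n]
  proof eventually_elim
    case (elim x)
    have "emp_cdf n x (c + inverse (real (Suc k))) = 1" for k
    proof (intro emp_cdf_eq_1 allI impI)
      fix i
      assume "i < n"
      then have "x i \<le> 1"
        using elim by simp
      moreover have "0 < inverse (real (Suc k))"
        by simp
      ultimately show "x i \<le> c + inverse (real (Suc k))"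
        using assms(4) by linarith
    qed (use assms in simp)
    then show ?case
      unfolding Qplus_emp_cdf_le_iff[OF assms(1-3)] using assms by simp
  qed
  then show ?thesis
    using prob_Collect_eq_1[OF sets_Qplus_emp_cdf_le[OF assms(1-3)]] by simp
qed

lemma prob_Qminus_emp_cdf_ge_eq_1:
  assumes "n \<ge> 1" "0 < \<gamma>" "\<gamma> \<le> 1" "c \<le> 0"
  shows "measure (unif_n n) {x \<in> space (unif_n n). c \<le> Qminus \<gamma> (emp_cdf n x)} = 1"
proof -
  interpret prob_space "unif_n n"
    by (rule prob_space_unif_n)
  have "AE x in unif_n n. c \<le> Qminus \<gamma> (emp_cdf n x)"
    using AE_unif_n_unit_interval[of n]
  proof eventually_elim
    case (elim x)
    have "emp_cdf n x (c - inverse (real (Suc k))) = 0" for k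
    proof (intro emp_cdf_eq_0 allI impI)
      fix i
      assume "i < n"
      then have "0 \<le> x i"
        using elim by simp
      moreover have "0 < inverse (real (Suc k))"
        by simp
      ultimately show "c - inverse (real (Suc k)) < x i"
        using assms(4) by linarith
    qed
    then show ?case
      unfolding Qminus_emp_cdf_ge_iff[OF assms(1-3)] using assms by simp
  qed
  then show ?thesis
    using prob_Collect_eq_1[OF sets_Qminus_emp_cdf_ge[OF assms(1-3)]] by simp
qed

section \<open>The bound as a function of epsilon\<close>

lemma qbound_nonneg:
  assumes "0 < \<delta>" "\<delta> < 1" "0 \<le> \<gamma>'" "\<gamma>' \<le> 1" "0 < \<epsilon>" "\<epsilon> < 1"
  shows "0 \<le> qbound n \<gamma> \<gamma>' \<delta> \<epsilon>"
proof -
  have "0 \<le> ln (1 / \<delta>)" using assms by simp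
  then show ?thesis
    using assms unfolding qbound_def
    by (intro mult_nonneg_nonneg add_nonneg_nonneg divide_nonneg_nonneg) auto
qed

lemma sqrt_mult_add_le:
  fixes K v b \<epsilon> :: real
  assumes "0 \<le> K" "0 \<le> v" "0 \<le> b" "0 < \<epsilon>"
  shows "sqrt (K * (v + b)) \<le> sqrt (K * v) + \<epsilon> * b + K / (4 * \<epsilon>)"
proof -
  have "sqrt (K * (v + b)) \<le> sqrt (K * v) + sqrt (K * b)"
    using assms by (simp add: distrib_left sqrt_add_le_add_sqrt)
  also have "sqrt (K * b) = sqrt ((2 * \<epsilon> * b) * (K / (2 * \<epsilon>)))"
    using assms by simp
  also have "\<dots> \<le> (2 * \<epsilon> * b + K / (2 * \<epsilon>)) / 2"
    using assms by (intro arith_geo_mean_sqrt) auto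
  also have "\<dots> = \<epsilon> * b + K / (4 * \<epsilon>)"
    using assms by (simp add: field_simps)
  finally show ?thesis
    by simp
qed

lemma add_mult_le_square_of_sqrt_add_le:
  fixes u B t :: real
  assumes "0 \<le> u" "0 \<le> B" "sqrt u + B \<le> t"
  shows "u + B * t \<le> t\<^sup>2"
proof -
  have "sqrt u \<le> t" "0 \<le> t"
    using assms real_sqrt_ge_zero[of u] by linarith+
  have "u + B * t = sqrt u * sqrt u + B * t"
    using assms by simp
  also have "\<dots> \<le> sqrt u * t + B * t"
    using \<open>sqrt u \<le> t\<close> assms(1) by (intro add_right_mono mult_left_mono) auto
  also have "\<dots> \<le> t * t"
    using assms \<open>0 \<le> t\<close> by (simp flip: distrib_right add: mult_right_mono)
  finally show ?thesis
    by (simp add: power2_eq_square)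
qed

lemma quadratic_le_of_qbound_le:
  assumes "n \<ge> 1" "0 < \<delta>" "\<delta> < 1" "0 \<le> \<gamma>'" "\<gamma>' \<le> 1" "0 < \<epsilon>" "\<epsilon> < 1"
    and "qbound n \<gamma> \<gamma>' \<delta> \<epsilon> \<le> t"
  shows "2 * ln (1 / \<delta>) * (\<gamma>' * (1 - \<gamma>') + \<bar>\<gamma> - \<gamma>'\<bar> + 4 * t / 3) \<le> real n * t\<^sup>2"
proof -
  define K where "K = 2 * ln (1 / \<delta>) / real n"
  define v where "v = \<gamma>' * (1 - \<gamma>')"
  define a where "a = \<bar>\<gamma> - \<gamma>'\<bar>"
  have K: "0 < K" and v: "0 \<le> v" and a: "0 \<le> a"
    using assms by (auto simp: K_def v_def a_def)
  have t: "0 \<le> t"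
    using qbound_nonneg[of \<delta> \<gamma>' \<epsilon> n \<gamma>] assms by linarith
  have "qbound n \<gamma> \<gamma>' \<delta> \<epsilon> = (\<epsilon> * a + sqrt (K * v) + K / 3 + K / (4 * \<epsilon>)) / (1 - \<epsilon>)"
    using assms unfolding qbound_def
    by (simp add: K_def v_def a_def mult.assoc field_simps)
  then have "\<epsilon> * a + sqrt (K * v) + K / 3 + K / (4 * \<epsilon>) \<le> (1 - \<epsilon>) * t"
    using assms by (simp add: divide_le_eq mult.commute)
  with sqrt_mult_add_le[of K v "a + t" \<epsilon>] have "sqrt (K * (v + (a + t))) + K / 3 \<le> t"
    using K v a t assms by (simp add: algebra_simps)
  then have "K * (v + (a + t)) + K / 3 * t \<le> t\<^sup>2"
    using K v a t by (intro add_mult_le_square_of_sqrt_add_le) auto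
  then show ?thesis
    using assms by (simp add: K_def v_def a_def field_simps)
qed

lemma mult_one_minus_le_add_abs:
  fixes p q :: real
  assumes "0 \<le> p" "p \<le> 1" "0 \<le> q" "q \<le> 1"
  shows "p * (1 - p) \<le> q * (1 - q) + \<bar>p - q\<bar>"
proof -
  have "p * (1 - p) - q * (1 - q) = (p - q) * (1 - p - q)"
    by (simp add: algebra_simps)
  also have "\<dots> \<le> \<bar>p - q\<bar> * \<bar>1 - p - q\<bar>"
    by (metis abs_ge_self abs_mult)
  also have "\<dots> \<le> \<bar>p - q\<bar>"
    using assms by (intro mult_left_le) auto
  finally show ?thesis by simp
qed

lemma INF_qbound_quadratic:
  fixes n :: nat and \<gamma> \<gamma>' \<delta> :: real
  assumes "n \<ge> 1" "0 < \<delta>" "\<delta> < 1" "0 \<le> \<gamma>'" "\<gamma>' \<le> 1"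
  defines "T \<equiv> INF \<epsilon>\<in>{0<..<1}. qbound n \<gamma> \<gamma>' \<delta> \<epsilon>"
  shows "0 \<le> T"
    and "2 * ln (1 / \<delta>) * (\<gamma>' * (1 - \<gamma>') + \<bar>\<gamma> - \<gamma>'\<bar> + 4 * T / 3) \<le> real n * T\<^sup>2"
proof -
  have ne: "{0<..<1::real} \<noteq> {}" by auto
  have nonneg: "0 \<le> qbound n \<gamma> \<gamma>' \<delta> \<epsilon>" if "\<epsilon> \<in> {0<..<1}" for \<epsilon>
    using assms that by (intro qbound_nonneg) auto
  then have bdd: "bdd_below (qbound n \<gamma> \<gamma>' \<delta> ` {0<..<1})"
    by (intro bdd_belowI2) auto
  show "0 \<le> T"
    unfolding T_def using nonneg ne by (intro cINF_greatest) auto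
  define f where
    "f s = real n * s\<^sup>2 - 2 * ln (1 / \<delta>) * (\<gamma>' * (1 - \<gamma>') + \<bar>\<gamma> - \<gamma>'\<bar> + 4 * s / 3)" for s
  have "0 \<le> f s" if s: "T < s" for s
  proof -
    obtain \<epsilon> where "\<epsilon> \<in> {0<..<1}" "qbound n \<gamma> \<gamma>' \<delta> \<epsilon> < s"
      using s unfolding T_def cINF_less_iff[OF ne bdd] by blast
    then show ?thesis
      using quadratic_le_of_qbound_le[of n \<delta> \<gamma>' \<epsilon> \<gamma> s] assms by (simp add: f_def)
  qed
  then have "\<forall>\<^sub>F s in at_right T. 0 \<le> f s"
    using eventually_at_right_less[of T] by (auto elim: eventually_mono)
  moreover have "(f \<longlongrightarrow> f T) (at_right T)"
    unfolding f_def by (intro tendsto_intros) auto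
  ultimately have "0 \<le> f T"
    by (intro tendsto_lowerbound) auto
  then show "2 * ln (1 / \<delta>) * (\<gamma>' * (1 - \<gamma>') + \<bar>\<gamma> - \<gamma>'\<bar> + 4 * T / 3) \<le> real n * T\<^sup>2"
    by (simp add: f_def)
qed

lemma INF_qbound_pos:
  assumes "n \<ge> 1" "0 < \<delta>" "\<delta> < 1" "0 < \<gamma>'" "\<gamma>' < 1"
  shows "0 < (INF \<epsilon>\<in>{0<..<1}. qbound n \<gamma> \<gamma>' \<delta> \<epsilon>)"
proof -
  define T where "T = (INF \<epsilon>\<in>{0<..<1}. qbound n \<gamma> \<gamma>' \<delta> \<epsilon>)"
  have T: "0 \<le> T"
    and quad: "2 * ln (1 / \<delta>) * (\<gamma>' * (1 - \<gamma>') + \<bar>\<gamma> - \<gamma>'\<bar> + 4 * T / 3) \<le> real n * T\<^sup>2"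
    using INF_qbound_quadratic[of n \<delta> \<gamma>' \<gamma>] assms by (simp_all add: T_def)
  have "0 < 2 * ln (1 / \<delta>) * (\<gamma>' * (1 - \<gamma>') + \<bar>\<gamma> - \<gamma>'\<bar>)"
    using assms by (intro mult_pos_pos add_pos_nonneg) auto
  then have "T \<noteq> 0"
    using quad by auto
  then show ?thesis
    using T by (simp add: T_def)
qed

lemma Bernstein_bound_le_at_INF_qbound:
  fixes n :: nat and \<gamma> \<gamma>' \<delta> p :: real
  defines "T \<equiv> INF \<epsilon>\<in>{0<..<1}. qbound n \<gamma> \<gamma>' \<delta> \<epsilon>"
  assumes "n \<ge> 1" "0 < \<delta>" "\<delta> < 1" "0 < \<gamma>'" "\<gamma>' < 1" "0 < p" "p < 1"
    and "\<bar>p - \<gamma>\<bar> = T"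
  shows "exp (- (real n * T\<^sup>2) / (2 * (p * (1 - p) + T / 3))) \<le> \<delta>"
proof -
  define L where "L = ln (1 / \<delta>)"
  have "0 < T"
    using INF_qbound_pos[of n \<delta> \<gamma>' \<gamma>] assms by (simp add: T_def)
  have "p * (1 - p) \<le> \<gamma>' * (1 - \<gamma>') + \<bar>p - \<gamma>'\<bar>"
    using assms by (intro mult_one_minus_le_add_abs) auto
  also have "\<bar>p - \<gamma>'\<bar> \<le> \<bar>\<gamma> - \<gamma>'\<bar> + T"
    using assms by linarith
  finally have var: "p * (1 - p) + T / 3 \<le> \<gamma>' * (1 - \<gamma>') + \<bar>\<gamma> - \<gamma>'\<bar> + 4 * T / 3"
    by simp
  have pos: "0 < p * (1 - p) + T / 3"
    using assms \<open>0 < T\<close> by (simp add: add_pos_pos)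
  have "2 * L * (p * (1 - p) + T / 3) \<le> 2 * L * (\<gamma>' * (1 - \<gamma>') + \<bar>\<gamma> - \<gamma>'\<bar> + 4 * T / 3)"
    using var assms by (intro mult_left_mono) (auto simp: L_def)
  also have "\<dots> \<le> real n * T\<^sup>2"
    using INF_qbound_quadratic(2)[of n \<delta> \<gamma>' \<gamma>] assms by (simp add: L_def T_def)
  finally have "L \<le> real n * T\<^sup>2 / (2 * (p * (1 - p) + T / 3))"
    using pos by (simp add: field_simps)
  then have "exp (- (real n * T\<^sup>2) / (2 * (p * (1 - p) + T / 3))) \<le> exp (- L)"
    by simp
  also have "exp (- L) = \<delta>"
    using assms by (simp add: L_def ln_div)
  finally show ?thesis .
qed

theorem lemma3:
  fixes n :: nat and \<gamma> \<gamma>' \<delta> :: real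
  assumes "n \<ge> 1"
    and "0 < \<gamma>" "\<gamma> < 1" and "0 < \<gamma>'" "\<gamma>' < 1" and "0 < \<delta>" "\<delta> < 1"
  shows "measure (unif_n n)
           {x \<in> space (unif_n n).
              Qplus \<gamma> (emp_cdf n x) - \<gamma> \<le> (INF \<epsilon>\<in>{0<..<1}. qbound n \<gamma> \<gamma>' \<delta> \<epsilon>)}
           \<ge> 1 - \<delta>
         \<and> measure (unif_n n)
           {x \<in> space (unif_n n).
              \<gamma> - Qminus \<gamma> (emp_cdf n x) \<le> (INF \<epsilon>\<in>{0<..<1}. qbound n \<gamma> \<gamma>' \<delta> \<epsilon>)}
           \<ge> 1 - \<delta>"
proof -
  define T where "T = (INF \<epsilon>\<in>{0<..<1}. qbound n \<gamma> \<gamma>' \<delta> \<epsilon>)"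
  have "0 < T"
    using INF_qbound_pos[of n \<delta> \<gamma>' \<gamma>] assms by (simp add: T_def)
  have Bernstein_le: "exp (- (real n * T\<^sup>2) / (2 * (p * (1 - p) + T / 3))) \<le> \<delta>"
    if "0 < p" "p < 1" "\<bar>p - \<gamma>\<bar> = T" for p
    using Bernstein_bound_le_at_INF_qbound[of n \<delta> \<gamma>' p \<gamma>] assms that by (simp add: T_def)
  have "1 - \<delta> \<le> measure (unif_n n) {x \<in> space (unif_n n). Qplus \<gamma> (emp_cdf n x) \<le> \<gamma> + T}"
  proof (cases "\<gamma> + T < 1")
    case True
    then have "measure (unif_n n) {x \<in> space (unif_n n). emp_cdf n x (\<gamma> + T) \<le> \<gamma>} \<le> \<delta>"
      using emp_cdf_lower_tail[of n "\<gamma> + T" T] Bernstein_le[of "\<gamma> + T"] assms \<open>0 < T\<close> by simp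
    then show ?thesis
      using prob_Qplus_emp_cdf_le[of n \<gamma> "\<gamma> + T"] assms by linarith
  qed (use prob_Qplus_emp_cdf_le_eq_1[of n \<gamma> "\<gamma> + T"] assms in simp)
  moreover have "1 - \<delta> \<le> measure (unif_n n) {x \<in> space (unif_n n). \<gamma> - T \<le> Qminus \<gamma> (emp_cdf n x)}"
  proof (cases "0 < \<gamma> - T")
    case True
    then have "measure (unif_n n) {x \<in> space (unif_n n). \<gamma> \<le> emp_cdf n x (\<gamma> - T)} \<le> \<delta>"
      using emp_cdf_upper_tail[of n "\<gamma> - T" T] Bernstein_le[of "\<gamma> - T"] assms \<open>0 < T\<close> by simp
    then show ?thesis
      using prob_Qminus_emp_cdf_ge[of n \<gamma> "\<gamma> - T"] assms by linarith
  qed (use prob_Qminus_emp_cdf_ge_eq_1[of n \<gamma> "\<gamma> - T"] assms in simp)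
  ultimately show ?thesis
    unfolding T_def[symmetric] by (simp add: diff_le_eq le_diff_eq add.commute)
qed

end
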